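(* Let $A\subseteq\Delta^{m-1}\times\Delta^{n-1}$, let $\mathscr T$ be a triangulation of $A$, and let $\sigma\in\mathscr T$. Then there exists $\tau\in\mathscr T$ with $\sigma\subseteq\tau$ such that every $f\in\Delta^{n-1}$ which is adjacent in $G(A)$ to some vertex of $G(\sigma)$ is also adjacent in $G(\tau)$ to some vertex of $G(\sigma)$. The same holds with the roles of $\Delta^{m-1}$ and $\Delta^{n-1}$ exchanged (i.e. for $e\in\Delta^{m-1}$ in place of $f$).
   Context: For a finite point set $A\subset\mathbb R^d$: a cell is a subset of $A$; a simplex is an affinely independent cell; a face of a cell $C$ is a subset $F\subseteq C$ which is the set of minimizers on $C$ of some linear functional. A triangulation of $A$ is a collection $\mathscr T$ of simplices of $A$, closed under taking faces, such that for all $\sigma,\sigma'\in\mathscr T$, $\mathrm{conv}(\sigma)\cap\mathrm{conv}(\sigma')=\mathrm{conv}(F)$ for a common face $F$ of $\sigma$ and $\sigma'$, and such that $\bigcup_{\sigma\in\mathscr T}\mathrm{conv}(\sigma)=\mathrm{conv}(A)$. $\Delta^{m-1}=\{e_1,\dots,e_m\}$ and $\Delta^{n-1}=\{f_1,\dots,f_n\}$ are the standard bases of $\mathbb R^m$ and $\mathbb R^n$, and $\Delta^{m-1}\times\Delta^{n-1}:=\{(e_i,f_j)\}\subset\mathbb R^m\times\mathbb R^n$. Let $K$ be the complete bipartite graph on $\Delta^{m-1}\cup\Delta^{n-1}$ with edges $e_if_j$. For $C\subseteq\Delta^{m-1}\times\Delta^{n-1}$, $G(C)$ is the minimal subgraph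 of $K$ with edge set $\{e_if_j:(e_i,f_j)\in C\}$. *)

theory Defs
  imports "HOL-Analysis.Analysis"
begin

text \<open>The vertices e_1..e_m are indexed by
  the finite type 'm, the vertices f_1..f_n by the finite type 'n; the ambient space
  R^m x R^n is real^('m + 'n).  The point (e_i, f_j) is pt (i, j).  Cells are sets of
  index pairs (i, j), identified with the points (e_i, f_j).\<close>

definition pt :: "'m::finite \<times> 'n::finite \<Rightarrow> real^('m + 'n)" where
  "pt p = axis (Inl (fst p)) 1 + axis (Inr (snd p)) 1"

definition is_simplex :: "('m::finite \<times> 'n::finite) set \<Rightarrow> bool" where
  "is_simplex C \<longleftrightarrow> \<not> affine_dependent (pt ` C)"

text \<open>A face of a cell C: the set of minimizers on C of some linear functional
  (every linear functional on real^k is x \<mapsto> c \<bullet> x); the empty face is also admitted.\<close>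
definition is_face :: "('m::finite \<times> 'n::finite) set \<Rightarrow> ('m \<times> 'n) set \<Rightarrow> bool" where
  "is_face F C \<longleftrightarrow> F \<subseteq> C \<and>
     (F = {} \<or> (\<exists>c :: real^('m + 'n).
        F = {x \<in> C. \<forall>y \<in> C. c \<bullet> pt x \<le> c \<bullet> pt y}))"

definition is_triangulation ::
  "('m::finite \<times> 'n::finite) set set \<Rightarrow> ('m \<times> 'n) set \<Rightarrow> bool" where
  "is_triangulation T A \<longleftrightarrow>
     (\<forall>\<sigma>\<in>T. \<sigma> \<subseteq> A \<and> is_simplex \<sigma>) \<and>
     (\<forall>\<sigma>\<in>T. \<forall>F. is_face F \<sigma> \<longrightarrow> F \<in> T) \<and>
     (\<forall>\<sigma>\<in>T. \<forall>\<sigma>'\<in>T. \<exists>F. is_face F \<sigma> \<and> is_face F \<sigma>' \<and>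
        convex hull (pt ` \<sigma>) \<inter> convex hull (pt ` \<sigma>') = convex hull (pt ` F)) \<and>
     (\<Union>\<sigma>\<in>T. convex hull (pt ` \<sigma>)) = convex hull (pt ` A)"

text \<open>The graph G(C): its edges are e_i f_j for (i,j) \<in> C; its vertices are the endpoints
  of these edges.  e-vertices of G(C) / f-vertices of G(C):\<close>
definition G_evertices :: "('m \<times> 'n) set \<Rightarrow> 'm set" where
  "G_evertices C = fst ` C"
definition G_fvertices :: "('m \<times> 'n) set \<Rightarrow> 'n set" where
  "G_fvertices C = snd ` C"
definition G_adj :: "('m \<times> 'n) set \<Rightarrow> 'm \<Rightarrow> 'n \<Rightarrow> bool" where
  "G_adj C i j \<longleftrightarrow> (i, j) \<in> C"

end

theory Submission
  imports Defs
begin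

text \<open>Let \<open>I\<close> be the set of \<open>e\<close>-vertices of \<open>\<sigma>\<close> and \<open>A\<^sub>I\<close> the points of \<open>A\<close> whose
  \<open>e\<close>-vertex lies in \<open>I\<close>. Walk from the barycentre \<open>b\<close> of \<open>\<sigma>\<close> towards the barycentre \<open>q\<close> of
  \<open>A\<^sub>I\<close>. Since the finitely many closed cells cover the segment, one cell \<open>\<tau>\<close> contains \<open>b\<close>
  together with a point \<open>x\<close> of the segment beyond \<open>b\<close>; as \<open>b\<close> is relatively interior to \<open>\<sigma>\<close>, the
  intersection property forces \<open>\<sigma> \<subseteq> \<tau>\<close>. The point \<open>x\<close> has a positive \<open>f\<^sub>j\<close>-coordinate for
  every \<open>f\<^sub>j\<close> adjacent to \<open>I\<close> in \<open>G(A)\<close>, and vanishing \<open>e\<^sub>i\<close>-coordinates for \<open>i \<notin> I\<close>. Writing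
  \<open>x\<close> as a convex combination of the vertices of \<open>\<tau>\<close>, a vertex \<open>(e\<^sub>i, f\<^sub>j)\<close> with positive
  weight must therefore have \<open>i \<in> I\<close>.\<close>

definition barycentre :: "'a::real_vector set \<Rightarrow> 'a" where
  "barycentre S = (\<Sum>v\<in>S. (1 / real (card S)) *\<^sub>R v)"

lemma barycentre_in_convex_hull:
  assumes "finite S" "S \<noteq> {}"
  shows "barycentre S \<in> convex hull S"
  unfolding barycentre_def
  using assms by (intro convex_sum convex_convex_hull) (auto intro: hull_inc)

lemma barycentre_in_rel_interior:
  fixes S :: "'a::euclidean_space set"
  assumes "\<not> affine_dependent S" "S \<noteq> {}"
  shows "barycentre S \<in> rel_interior (convex hull S)"
  using assms aff_independent_finite[OF assms(1)]
  unfolding rel_interior_convex_hull_explicit[OF assms(1)] barycentre_def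
  by (auto simp: card_gt_0_iff intro!: exI[of _ "\<lambda>_. 1 / real (card S)"])

lemma barycentre_component_pos:
  fixes S :: "(real^'k) set"
  assumes "finite S" "\<forall>v\<in>S. 0 \<le> v $ k" "w \<in> S" "0 < w $ k"
  shows "0 < barycentre S $ k"
proof -
  have "0 < real (card S)"
    using assms(1,3) by (auto simp: card_gt_0_iff)
  moreover have "w $ k \<le> (\<Sum>v\<in>S. v $ k)"
    using assms by (intro member_le_sum) auto
  ultimately show ?thesis
    using assms(4) by (simp add: barycentre_def sum_divide_distrib[symmetric])
qed

lemma convex_hull_component_in:
  fixes S :: "(real^'k) set"
  assumes "convex I" "\<forall>v\<in>S. v $ k \<in> I" "x \<in> convex hull S"
  shows "x $ k \<in> I"
proof -
  have "convex ((\<lambda>x. x $ k) -` I)"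
    using assms(1) by (intro convex_linear_vimage bounded_linear.linear) auto
  then have "convex hull S \<subseteq> (\<lambda>x. x $ k) -` I"
    using assms(2) by (intro hull_minimal) auto
  then show ?thesis
    using assms(3) by auto
qed

lemma convex_hull_pos_component_support:
  fixes V :: "(real^'k) set"
  assumes "finite V" "\<forall>v\<in>V. \<forall>l. 0 \<le> v $ l" "x \<in> convex hull V" "0 < x $ k"
  shows "\<exists>v\<in>V. 0 < v $ k \<and> (\<forall>l. 0 < v $ l \<longrightarrow> 0 < x $ l)"
proof -
  obtain u where u_nonneg: "\<forall>v\<in>V. 0 \<le> u v" and x_eq: "(\<Sum>v\<in>V. u v *\<^sub>R v) = x"
    using assms(1,3) by (auto simp: convex_hull_finite)
  have x_component: "x $ l = (\<Sum>v\<in>V. u v * v $ l)" for l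
    using x_eq[symmetric] by simp
  have "(\<Sum>v\<in>V. u v * v $ k) \<noteq> 0"
    using assms(4) x_component[of k] by simp
  then obtain v where v: "v \<in> V" "u v * v $ k \<noteq> 0"
    using sum.not_neutral_contains_not_neutral by blast
  then have u_pos: "0 < u v" and v_pos: "0 < v $ k"
    using u_nonneg assms(2) by (auto simp: order_le_less)
  have "0 < x $ l" if "0 < v $ l" for l
  proof -
    have "0 < u v * v $ l"
      using u_pos that by simp
    also have "\<dots> \<le> x $ l"
      unfolding x_component using assms(1,2) u_nonneg v(1) by (intro member_le_sum) auto
    finally show ?thesis .
  qed
  then show ?thesis
    using v(1) v_pos by blast
qed

lemma closed_cover_segment_start:
  fixes p :: "real \<Rightarrow> 'a::topological_space"
  assumes "finite \<K>" "\<forall>K\<in>\<K>. closed K" "\<And>t. continuous (at t) p"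
    and cover: "\<forall>e\<in>{0<..1}. \<exists>K\<in>\<K>. p e \<in> K"
  shows "\<exists>K\<in>\<K>. p 0 \<in> K \<and> (\<exists>e\<in>{0<..1}. p e \<in> K)"
proof -
  define \<K>' where "\<K>' = {K\<in>\<K>. \<exists>e\<in>{0<..1}. p e \<in> K}"
  have "closed (\<Union>K\<in>\<K>'. p -` K)"
    using assms(1-3) by (auto simp: \<K>'_def intro!: continuous_closed_vimage)
  moreover have "{0<..1} \<subseteq> (\<Union>K\<in>\<K>'. p -` K)"
    using cover by (fastforce simp: \<K>'_def)
  ultimately have "closure {0<..(1::real)} \<subseteq> (\<Union>K\<in>\<K>'. p -` K)"
    by (rule closure_minimal[rotated])
  then have "0 \<in> (\<Union>K\<in>\<K>'. p -` K)"
    by (simp add: subset_iff)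
  then obtain K where "K \<in> \<K>'" "p 0 \<in> K"
    by blast
  then show ?thesis
    unfolding \<K>'_def by blast
qed

lemma pt_component_Inl: "pt p $ Inl i = (if fst p = i then 1 else 0)"
  by (simp add: pt_def axis_def)

lemma pt_component_Inr: "pt p $ Inr j = (if snd p = j then 1 else 0)"
  by (simp add: pt_def axis_def)

lemma pt_component_nonneg: "0 \<le> pt p $ l"
  by (cases l) (simp_all add: pt_component_Inl pt_component_Inr)

lemma inj_pt: "inj pt"
proof (rule injI)
  fix a b :: "'m::finite \<times> 'n::finite"
  assume "pt a = pt b"
  then have "pt a $ Inl (fst a) = pt b $ Inl (fst a)" "pt a $ Inr (snd a) = pt b $ Inr (snd a)"
    by auto
  then show "a = b"
    by (simp add: pt_component_Inl pt_component_Inr split: if_splits) (metis prod.collapse)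
qed

lemma triangulation_cellD:
  assumes "is_triangulation T A" "\<sigma> \<in> T"
  shows "\<sigma> \<subseteq> A" "\<not> affine_dependent (pt ` \<sigma>)"
  using assms(1)[unfolded is_triangulation_def, THEN conjunct1] assms(2)
  by (auto simp: is_simplex_def)

lemma triangulation_intersectionE:
  assumes "is_triangulation T A" "\<sigma> \<in> T" "\<tau> \<in> T"
  obtains F where "is_face F \<sigma>" "is_face F \<tau>"
    "convex hull (pt ` \<sigma>) \<inter> convex hull (pt ` \<tau>) = convex hull (pt ` F)"
  using assms(1)[unfolded is_triangulation_def, THEN conjunct2, THEN conjunct2, THEN conjunct1]
    assms(2,3) by blast

lemma triangulation_covers:
  assumes "is_triangulation T A"
  shows "(\<Union>\<sigma>\<in>T. convex hull (pt ` \<sigma>)) = convex hull (pt ` A)"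
  using assms unfolding is_triangulation_def by (elim conjE)

text \<open>The intersection of \<open>conv \<sigma>\<close> with \<open>conv \<tau>\<close> is the hull of a face of \<open>\<sigma>\<close>; a face
  meeting the relative interior is all of \<open>conv \<sigma>\<close>, whose vertices are extreme points.\<close>

lemma triangulation_cell_superset:
  assumes tri: "is_triangulation T A" and "\<sigma> \<in> T" "\<tau> \<in> T"
    and x_\<sigma>: "x \<in> rel_interior (convex hull (pt ` \<sigma>))" and x_\<tau>: "x \<in> convex hull (pt ` \<tau>)"
  shows "\<sigma> \<subseteq> \<tau>"
proof
  fix y assume "y \<in> \<sigma>"
  have indep: "\<not> affine_dependent (pt ` \<sigma>)"
    using triangulation_cellD[OF tri \<open>\<sigma> \<in> T\<close>] by blast
  obtain F where "is_face F \<sigma>" "is_face F \<tau>" and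
    F_hull: "convex hull (pt ` \<sigma>) \<inter> convex hull (pt ` \<tau>) = convex hull (pt ` F)"
    using triangulation_intersectionE[OF tri \<open>\<sigma> \<in> T\<close> \<open>\<tau> \<in> T\<close>] by blast
  then have "F \<subseteq> \<sigma>" "F \<subseteq> \<tau>"
    by (auto simp: is_face_def)
  have "convex hull (pt ` F) face_of convex hull (pt ` \<sigma>)"
    using face_of_convex_hull_affine_independent[OF indep] \<open>F \<subseteq> \<sigma>\<close>
    by (auto intro!: exI[of _ "pt ` F"] image_mono)
  moreover have "x \<in> convex hull (pt ` F)"
    using F_hull x_\<tau> x_\<sigma> rel_interior_subset by blast
  ultimately have "convex hull (pt ` F) = convex hull (pt ` \<sigma>)"
    using face_of_disjoint_rel_interior x_\<sigma> by blast
  moreover have "pt y extreme_point_of convex hull (pt ` \<sigma>)"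
    using extreme_point_of_convex_hull_affine_independent[OF indep] \<open>y \<in> \<sigma>\<close> by simp
  ultimately have "pt y \<in> pt ` F"
    by (metis extreme_point_of_convex_hull)
  then show "y \<in> \<tau>"
    using inj_pt \<open>F \<subseteq> \<tau>\<close> by (auto dest: injD)
qed

lemma triangulation_cell_toward_point:
  assumes tri: "is_triangulation T A" and "\<sigma> \<in> T" "\<sigma> \<noteq> {}"
    and q: "q \<in> convex hull (pt ` A)"
  shows "\<exists>\<tau>\<in>T. \<sigma> \<subseteq> \<tau> \<and>
    (\<exists>e\<in>{0<..1}. (1 - e) *\<^sub>R barycentre (pt ` \<sigma>) + e *\<^sub>R q \<in> convex hull (pt ` \<tau>))"
proof -
  define b where "b = barycentre (pt ` \<sigma>)"
  define p where "p = (\<lambda>e::real. (1 - e) *\<^sub>R b + e *\<^sub>R q)"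
  note \<sigma> = triangulation_cellD[OF tri \<open>\<sigma> \<in> T\<close>]
  have b_rel_interior: "b \<in> rel_interior (convex hull (pt ` \<sigma>))"
    unfolding b_def using \<sigma>(2) \<open>\<sigma> \<noteq> {}\<close> by (simp add: barycentre_in_rel_interior)
  have "b \<in> convex hull (pt ` \<sigma>)"
    using b_rel_interior rel_interior_subset by blast
  then have "b \<in> convex hull (pt ` A)"
    using \<sigma>(1) by (meson hull_mono image_mono subsetD)
  then have "p e \<in> (\<Union>\<tau>\<in>T. convex hull (pt ` \<tau>))" if "e \<in> {0<..1}" for e
    unfolding triangulation_covers[OF tri] p_def
    using convexD[OF convex_convex_hull _ q, of b "1 - e" e] that by simp
  then have cover: "\<forall>e\<in>{0<..1}. \<exists>K\<in>(\<lambda>\<tau>. convex hull (pt ` \<tau>)) ` T. p e \<in> K"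
    by blast
  have "finite ((\<lambda>\<tau>. convex hull (pt ` \<tau>)) ` T)"
    by simp
  moreover have "\<forall>K\<in>(\<lambda>\<tau>. convex hull (pt ` \<tau>)) ` T. closed K"
    by (auto intro!: compact_imp_closed finite_imp_compact_convex_hull)
  moreover have "continuous (at t) p" for t
    unfolding p_def by (intro continuous_intros)
  ultimately obtain \<tau> where "\<tau> \<in> T" "p 0 \<in> convex hull (pt ` \<tau>)"
      and "\<exists>e\<in>{0<..1}. p e \<in> convex hull (pt ` \<tau>)"
    using closed_cover_segment_start[OF _ _ _ cover] by blast
  moreover from this have "\<sigma> \<subseteq> \<tau>"
    using triangulation_cell_superset[OF tri \<open>\<sigma> \<in> T\<close> _ b_rel_interior] by (simp add: p_def)
  ultimately show ?thesis
    unfolding p_def b_def by blast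
qed

text \<open>With \<open>(P\<^sub>a, P\<^sub>b)\<close> the projections onto the \<open>e\<close>- and \<open>f\<close>-vertex (or vice versa) and
  \<open>c\<^sub>a, c\<^sub>b\<close> the matching coordinate embeddings, both halves of the theorem are instances.\<close>

lemma pt_hull_vertex_witness:
  fixes Pa :: "'m::finite \<times> 'n::finite \<Rightarrow> 'a" and Pb :: "'m \<times> 'n \<Rightarrow> 'b"
    and ca :: "'a \<Rightarrow> 'm + 'n" and cb :: "'b \<Rightarrow> 'm + 'n"
  assumes pt_ca: "\<And>x k. pt x $ ca k = (if Pa x = k then 1 else 0)"
    and pt_cb: "\<And>x k. pt x $ cb k = (if Pb x = k then 1 else 0)"
    and x_\<tau>: "x \<in> convex hull (pt ` \<tau>)"
    and outside: "\<And>k. k \<notin> I \<Longrightarrow> x $ ca k = 0" and "0 < x $ cb j"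
  shows "\<exists>y\<in>\<tau>. Pa y \<in> I \<and> Pb y = j"
proof -
  have "finite (pt ` \<tau>)" "\<forall>v\<in>pt ` \<tau>. \<forall>l. 0 \<le> v $ l"
    by (simp_all add: pt_component_nonneg)
  then obtain v where "v \<in> pt ` \<tau>" "0 < v $ cb j"
    and support: "\<forall>l. 0 < v $ l \<longrightarrow> 0 < x $ l"
    using convex_hull_pos_component_support[OF _ _ x_\<tau> \<open>0 < x $ cb j\<close>] by blast
  then obtain y where "y \<in> \<tau>" "v = pt y" "Pb y = j"
    by (auto simp: pt_cb split: if_splits)
  moreover have "Pa y \<in> I"
    using support[rule_format, of "ca (Pa y)"] outside \<open>v = pt y\<close> by (force simp: pt_ca)
  ultimately show ?thesis
    by blast
qed

lemma triangulation_cell_covering_neighbours: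
  fixes A :: "('m::finite \<times> 'n::finite) set"
    and Pa :: "'m \<times> 'n \<Rightarrow> 'a" and Pb :: "'m \<times> 'n \<Rightarrow> 'b"
    and ca :: "'a \<Rightarrow> 'm + 'n" and cb :: "'b \<Rightarrow> 'm + 'n"
  assumes tri: "is_triangulation T A" and "\<sigma> \<in> T"
    and pt_ca: "\<And>x k. pt x $ ca k = (if Pa x = k then 1 else 0)"
    and pt_cb: "\<And>x k. pt x $ cb k = (if Pb x = k then 1 else 0)"
  shows "\<exists>\<tau>\<in>T. \<sigma> \<subseteq> \<tau> \<and>
     (\<forall>j. (\<exists>x\<in>A. Pa x \<in> Pa ` \<sigma> \<and> Pb x = j) \<longrightarrow> (\<exists>y\<in>\<tau>. Pa y \<in> Pa ` \<sigma> \<and> Pb y = j))"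
proof (cases "\<sigma> = {}")
  case True
  then show ?thesis using \<open>\<sigma> \<in> T\<close> by auto
next
  case False
  define AI where "AI = {x\<in>A. Pa x \<in> Pa ` \<sigma>}"
  define q where "q = barycentre (pt ` AI)"
  have "\<sigma> \<subseteq> AI"
    using triangulation_cellD(1)[OF tri \<open>\<sigma> \<in> T\<close>] by (auto simp: AI_def)
  then have "q \<in> convex hull (pt ` AI)"
    unfolding q_def using False by (intro barycentre_in_convex_hull) auto
  moreover have "convex hull (pt ` AI) \<subseteq> convex hull (pt ` A)"
    by (intro hull_mono image_mono) (auto simp: AI_def)
  ultimately have "q \<in> convex hull (pt ` A)"
    by blast
  then obtain \<tau> e where "\<tau> \<in> T" "\<sigma> \<subseteq> \<tau>" "e \<in> {0<..1}"
      and x_\<tau>: "(1 - e) *\<^sub>R barycentre (pt ` \<sigma>) + e *\<^sub>R q \<in> convex hull (pt ` \<tau>)"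
      (is "?x \<in> _")
    using triangulation_cell_toward_point[OF tri \<open>\<sigma> \<in> T\<close> False] by blast
  then have "0 < e" "e \<le> 1"
    by auto
  have "barycentre (pt ` \<sigma>) \<in> convex hull (pt ` \<sigma>)"
    using False by (simp add: barycentre_in_convex_hull)
  then have b_AI: "barycentre (pt ` \<sigma>) \<in> convex hull (pt ` AI)"
    using \<open>\<sigma> \<subseteq> AI\<close> by (meson hull_mono image_mono subsetD)
  have x_AI: "?x \<in> convex hull (pt ` AI)"
    using convexD[OF convex_convex_hull b_AI \<open>q \<in> convex hull (pt ` AI)\<close>, of "1 - e" e]
      \<open>e \<le> 1\<close> \<open>0 < e\<close> by simp
  have x_outside: "?x $ ca k = 0" if "k \<notin> Pa ` \<sigma>" for k
  proof -
    have "\<forall>v\<in>pt ` AI. v $ ca k \<in> {0}"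
      using that by (auto simp: pt_ca AI_def)
    then show ?thesis
      using convex_hull_component_in[OF convex_singleton _ x_AI] by simp
  qed
  have x_neighbour: "0 < ?x $ cb j" if "x \<in> AI" "Pb x = j" for x j
  proof -
    have "0 \<le> barycentre (pt ` \<sigma>) $ cb j"
      using convex_hull_component_in[of "{0..}" "pt ` \<sigma>" "cb j"] False
      by (simp add: pt_cb barycentre_in_convex_hull)
    moreover have "0 < q $ cb j"
      unfolding q_def using that by (intro barycentre_component_pos) (auto simp: pt_cb)
    ultimately show ?thesis
      using \<open>0 < e\<close> \<open>e \<le> 1\<close> by (simp add: add_nonneg_pos)
  qed
  have "\<exists>y\<in>\<tau>. Pa y \<in> Pa ` \<sigma> \<and> Pb y = j" if "x \<in> A" "Pa x \<in> Pa ` \<sigma>" "Pb x = j" for x j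
    using that x_outside by (intro pt_hull_vertex_witness[OF pt_ca pt_cb x_\<tau>] x_neighbour)
      (auto simp: AI_def)
  then show ?thesis
    using \<open>\<tau> \<in> T\<close> \<open>\<sigma> \<subseteq> \<tau>\<close> by blast
qed

theorem proposition6p2:
  fixes A :: "('m::finite \<times> 'n::finite) set"
    and T :: "('m \<times> 'n) set set"
  assumes "is_triangulation T A"
    and "\<sigma> \<in> T"
  shows "(\<exists>\<tau>\<in>T. \<sigma> \<subseteq> \<tau> \<and>
            (\<forall>j. (\<exists>i\<in>G_evertices \<sigma>. G_adj A i j) \<longrightarrow> (\<exists>i\<in>G_evertices \<sigma>. G_adj \<tau> i j)))
       \<and> (\<exists>\<tau>\<in>T. \<sigma> \<subseteq> \<tau> \<and>
            (\<forall>i. (\<exists>j\<in>G_fvertices \<sigma>. G_adj A i j) \<longrightarrow> (\<exists>j\<in>G_fvertices \<sigma>. G_adj \<tau> i j)))"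
proof -
  have e_side: "(\<exists>i\<in>G_evertices C. G_adj D i j) \<longleftrightarrow> (\<exists>x\<in>D. fst x \<in> fst ` C \<and> snd x = j)"
    for C D :: "('m \<times> 'n) set" and j
    unfolding G_evertices_def G_adj_def by (metis fst_conv image_iff prod.collapse snd_conv)
  have f_side: "(\<exists>j\<in>G_fvertices C. G_adj D i j) \<longleftrightarrow> (\<exists>x\<in>D. snd x \<in> snd ` C \<and> fst x = i)"
    for C D :: "('m \<times> 'n) set" and i
    unfolding G_fvertices_def G_adj_def by (metis fst_conv image_iff prod.collapse snd_conv)
  have "\<exists>\<tau>\<in>T. \<sigma> \<subseteq> \<tau> \<and>
      (\<forall>j. (\<exists>x\<in>A. fst x \<in> fst ` \<sigma> \<and> snd x = j) \<longrightarrow> (\<exists>y\<in>\<tau>. fst y \<in> fst ` \<sigma> \<and> snd y = j))"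
    by (rule triangulation_cell_covering_neighbours[OF assms pt_component_Inl pt_component_Inr])
  moreover have "\<exists>\<tau>\<in>T. \<sigma> \<subseteq> \<tau> \<and>
      (\<forall>i. (\<exists>x\<in>A. snd x \<in> snd ` \<sigma> \<and> fst x = i) \<longrightarrow> (\<exists>y\<in>\<tau>. snd y \<in> snd ` \<sigma> \<and> fst y = i))"
    by (rule triangulation_cell_covering_neighbours[OF assms pt_component_Inr pt_component_Inl])
  ultimately show ?thesis
    unfolding e_side f_side by blast
qed

end
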